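(* Let $m\ge1$, $q=2^m$, let $n$ be odd, and let $L$ be a $2$-linear polynomial over $\mathbb F_{q^n}$. Then $\mathrm{Tr}(x^{q+1})+L(x)$ is a permutation polynomial of $\mathbb F_{q^n}$ if and only if $L^\prime(\ker\mathrm{Tr})=\ker\mathrm{Tr}$ and the map $x\mapsto L^\prime(x)+x^{1/2}$ induces an automorphism of the additive quotient group $\mathbb F_{q^n}/\ker\mathrm{Tr}$ (via $\ker\mathrm{Tr}+\alpha\mapsto\ker\mathrm{Tr}+L'(\alpha)+\alpha^{1/2}$).
   Context: $\mathrm{Tr}$ denotes the trace map of $\mathbb F_{q^n}$ over $\mathbb F_q$. A $2$-linear polynomial over $\mathbb F_{q^n}$ has the form $\sum_{j=0}^{mn-1}a_jx^{2^j}$, $a_j\in\mathbb F_{q^n}$; its adjoint is $L^\prime(x)=\sum_j(a_jx)^{2^{-j}}$, where $y\mapsto y^{2^{-j}}$ is the inverse of $y\mapsto y^{2^j}$ on $\mathbb F_{q^n}$; $x^{1/2}$ denotes the inverse of the automorphism $x\mapsto x^2$ of $\mathbb F_{q^n}$. Polynomials are regarded as maps on $\mathbb F_{q^n}$. *)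

theory Defs
  imports Main
begin

definition tr :: "nat \<Rightarrow> nat \<Rightarrow> 'a::field \<Rightarrow> 'a" where
  "tr m n x = (\<Sum>i<n. x ^ ((2 ^ m) ^ i))"

definition ker_tr :: "nat \<Rightarrow> nat \<Rightarrow> 'a::field set" where
  "ker_tr m n = {x. tr m n x = 0}"

definition frob_inv :: "nat \<Rightarrow> 'a::field \<Rightarrow> 'a" where
  "frob_inv j y = (THE z. z ^ (2 ^ j) = y)"

definition sqrt2 :: "'a::field \<Rightarrow> 'a" where
  "sqrt2 y = (THE z. z ^ 2 = y)"

definition lin2 :: "nat \<Rightarrow> (nat \<Rightarrow> 'a::field) \<Rightarrow> 'a \<Rightarrow> 'a" where
  "lin2 N a x = (\<Sum>j<N. a j * x ^ (2 ^ j))"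

definition lin2_adj :: "nat \<Rightarrow> (nat \<Rightarrow> 'a::field) \<Rightarrow> 'a \<Rightarrow> 'a" where
  "lin2_adj N a x = (\<Sum>j<N. frob_inv j (a j * x))"

definition coset :: "'a::ab_group_add set \<Rightarrow> 'a \<Rightarrow> 'a set" where
  "coset K a = (\<lambda>k. k + a) ` K"

definition quot :: "'a::ab_group_add set \<Rightarrow> 'a set set" where
  "quot K = range (coset K)"

definition induced :: "'a::ab_group_add set \<Rightarrow> ('a \<Rightarrow> 'a) \<Rightarrow> 'a set \<Rightarrow> 'a set" where
  "induced K \<phi> C = coset K (\<phi> (SOME a. C = coset K a))"

definition induces_automorphism :: "'a::ab_group_add set \<Rightarrow> ('a \<Rightarrow> 'a) \<Rightarrow> bool" where
  "induces_automorphism K \<phi> \<longleftrightarrow>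
     (\<forall>a b. coset K a = coset K b \<longrightarrow> coset K (\<phi> a) = coset K (\<phi> b)) \<and>
     (\<forall>a b. coset K (\<phi> (a + b)) = coset K (\<phi> a + \<phi> b)) \<and>
     bij_betw (induced K \<phi>) (quot K) (quot K)"

end

theory Submission
  imports Defs "HOL-Computational_Algebra.Polynomial" "HOL-Number_Theory.Residues"
begin

(* Write q = 2^m, F = GF(q^n), S = {x. x^q = x} = GF(q) and K = ker Tr. For
   f x = Tr(x^(q+1)) + L x one has f (x + y) = f x + f y + Tr(x c(y)) with
   c(y) = y^q + y^(q^(n-1)); for odd n the kernel of c is exactly S, and Tr maps F
   onto S. Hence f is injective iff L maps no y outside S into S and
   g y = L y + y^2 has no nonzero root in S. Both conditions are then dualised with
   the trace form (x, y) \<mapsto> T(x y), T the absolute trace of F over GF(2): the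
   orthogonal complement of S is K, and L' is adjoint to L and x^(1/2) to x^2. So the
   first condition becomes L'(K) = K and the second says that L' + x^(1/2) is
   injective, hence bijective, on F/K. *)

definition add_subgroup :: "'a::ab_group_add set \<Rightarrow> bool" where
  "add_subgroup V \<longleftrightarrow> 0 \<in> V \<and> (\<forall>x\<in>V. \<forall>y\<in>V. x + y \<in> V) \<and> (\<forall>x\<in>V. - x \<in> V)"

lemma add_subgroup_UNIV: "add_subgroup UNIV"
  by (simp add: add_subgroup_def)

lemma add_subgroup_diff:
  assumes "add_subgroup V" and "x \<in> V" and "y \<in> V"
  shows "x - y \<in> V"
  using assms unfolding add_subgroup_def by (metis diff_conv_add_uminus)

lemma add_subgroup_image:
  assumes "additive h" and "add_subgroup V"
  shows "add_subgroup (h ` V)"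
  unfolding add_subgroup_def
proof (intro conjI ballI)
  show "0 \<in> h ` V"
    using assms additive.zero[of h] by (force simp: add_subgroup_def)
  fix x y assume "x \<in> h ` V" "y \<in> h ` V"
  then obtain u v where "u \<in> V" "v \<in> V" "x = h u" "y = h v"
    by blast
  with assms show "x + y \<in> h ` V" and "- x \<in> h ` V"
    by (auto simp: add_subgroup_def additive.add[symmetric] additive.minus[symmetric])
qed

lemma add_subgroup_kernel:
  assumes "additive h"
  shows "add_subgroup {x. h x = 0}"
  using assms by (simp add: add_subgroup_def additive.zero additive.add additive.minus)

lemma additive_plus:
  assumes "additive f" and "additive g"
  shows "additive (\<lambda>x. f x + g x)"
  using assms by unfold_locales (simp add: additive.add)

lemma additive_inj_on_iff:
  assumes "additive g" and "add_subgroup S"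
  shows "inj_on g S \<longleftrightarrow> (\<forall>y\<in>S. g y = 0 \<longrightarrow> y = 0)"
proof
  assume inj: "inj_on g S"
  show "\<forall>y\<in>S. g y = 0 \<longrightarrow> y = 0"
  proof (intro ballI impI)
    fix y assume "y \<in> S" "g y = 0"
    moreover have "0 \<in> S" "g 0 = 0"
      using assms by (simp_all add: add_subgroup_def additive.zero)
    ultimately show "y = 0"
      using inj by (metis inj_onD)
  qed
next
  assume kernel: "\<forall>y\<in>S. g y = 0 \<longrightarrow> y = 0"
  show "inj_on g S"
  proof (rule inj_onI)
    fix x y assume "x \<in> S" "y \<in> S" "g x = g y"
    then have "x - y \<in> S" and "g (x - y) = 0"
      using assms by (simp_all add: add_subgroup_diff additive.diff)
    with kernel have "x - y = 0"
      by blast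
    then show "x = y"
      by simp
  qed
qed

lemma (in additive) card_range_mult_card_kernel:
  assumes "finite (UNIV :: 'a set)"
  shows "card (range f) * card {x. f x = 0} = card (UNIV :: 'a set)"
proof -
  have fibre: "card (f -` {y}) = card {x. f x = 0}" if y: "y \<in> range f" for y
  proof -
    obtain x0 where "y = f x0"
      using y by blast
    have "f -` {y} = (\<lambda>k. k + x0) ` {x. f x = 0}"
    proof (intro equalityI subsetI)
      fix x assume "x \<in> f -` {y}"
      then have "f (x - x0) = 0" and "x = (x - x0) + x0"
        using \<open>y = f x0\<close> by (simp_all add: diff)
      then show "x \<in> (\<lambda>k. k + x0) ` {x. f x = 0}"
        by blast
    qed (auto simp: add \<open>y = f x0\<close>)
    then show ?thesis
      by (simp add: card_image)
  qed
  have "UNIV = (\<Union>y\<in>range f. f -` {y})"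
    by blast
  then have "card (UNIV :: 'a set) = card (\<Union>y\<in>range f. f -` {y})"
    by simp
  also have "\<dots> = (\<Sum>y\<in>range f. card (f -` {y}))"
    using assms by (intro card_UN_disjoint) (auto intro: finite_subset)
  also have "\<dots> = card (range f) * card {x. f x = 0}"
    by (simp add: fibre)
  finally show ?thesis ..
qed

lemma bij_iff_translate_neq:
  fixes f :: "'a::{ab_group_add,finite} \<Rightarrow> 'a"
  shows "bij f \<longleftrightarrow> (\<forall>x y. y \<noteq> 0 \<longrightarrow> f (x + y) \<noteq> f x)"
proof -
  have "inj f \<longleftrightarrow> (\<forall>x y. y \<noteq> 0 \<longrightarrow> f (x + y) \<noteq> f x)"
  proof
    assume "inj f"
    show "\<forall>x y. y \<noteq> 0 \<longrightarrow> f (x + y) \<noteq> f x"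
    proof (intro allI impI notI)
      fix x y assume "y \<noteq> 0" and "f (x + y) = f x"
      then have "x + y = x"
        using \<open>inj f\<close> by (simp add: inj_eq)
      with \<open>y \<noteq> 0\<close> show False
        by simp
    qed
  next
    assume translate: "\<forall>x y. y \<noteq> 0 \<longrightarrow> f (x + y) \<noteq> f x"
    show "inj f"
    proof (rule injI)
      fix u v assume "f u = f v"
      then have "f (v + (u - v)) = f v"
        by simp
      with translate have "u - v = 0"
        by blast
      then show "u = v"
        by simp
    qed
  qed
  then show ?thesis
    using finite_UNIV_inj_surj[of f] by (auto simp: bij_def)
qed

lemma coset_eq_iff:
  assumes "add_subgroup K"
  shows "coset K x = coset K y \<longleftrightarrow> x - y \<in> K"
proof -
  have subset: "coset K x \<subseteq> coset K y" if "x - y \<in> K" for x y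
  proof
    fix z assume "z \<in> coset K x"
    then obtain k where "k \<in> K" "z = k + x"
      by (auto simp: coset_def)
    moreover have "k + (x - y) \<in> K"
      using assms \<open>k \<in> K\<close> that by (simp add: add_subgroup_def)
    ultimately show "z \<in> coset K y"
      unfolding coset_def by (auto intro!: image_eqI[of _ _ "k + (x - y)"])
  qed
  show ?thesis
  proof
    assume "coset K x = coset K y"
    moreover have "x \<in> coset K x"
      using assms by (force simp: coset_def add_subgroup_def)
    ultimately obtain k where "k \<in> K" "x = k + y"
      by (auto simp: coset_def)
    then show "x - y \<in> K"
      by simp
  next
    assume "x - y \<in> K"
    moreover have "y - x \<in> K"
      using assms \<open>x - y \<in> K\<close> minus_diff_eq[of x y] by (metis add_subgroup_def)
    ultimately show "coset K x = coset K y"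
      using subset by blast
  qed
qed

context
  fixes K :: "'a::{ab_group_add,finite} set" and \<phi> :: "'a \<Rightarrow> 'a"
  assumes K: "add_subgroup K" and \<phi>: "additive \<phi>" and \<phi>_K: "\<phi> ` K \<subseteq> K"
begin

lemma coset_eq_imp_coset_eq:
  assumes "coset K x = coset K y"
  shows "coset K (\<phi> x) = coset K (\<phi> y)"
  using assms \<phi>_K by (auto simp: coset_eq_iff[OF K] additive.diff[OF \<phi>, symmetric])

lemma induced_coset: "induced K \<phi> (coset K x) = coset K (\<phi> x)"
proof -
  have "coset K x = coset K (SOME b. coset K x = coset K b)"
    by (rule someI) (rule refl)
  then show ?thesis
    unfolding induced_def by (metis coset_eq_imp_coset_eq)
qed

lemma induces_automorphism_iff_kernel:
  "induces_automorphism K \<phi> \<longleftrightarrow> (\<forall>x. \<phi> x \<in> K \<longrightarrow> x \<in> K)"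
proof -
  have into: "induced K \<phi> ` quot K \<subseteq> quot K"
    by (auto simp: quot_def induced_coset)
  have "inj_on (induced K \<phi>) (quot K) \<longleftrightarrow> (\<forall>x. \<phi> x \<in> K \<longrightarrow> x \<in> K)"
  proof
    assume inj: "inj_on (induced K \<phi>) (quot K)"
    show "\<forall>x. \<phi> x \<in> K \<longrightarrow> x \<in> K"
    proof (intro allI impI)
      fix x assume "\<phi> x \<in> K"
      then have "induced K \<phi> (coset K x) = induced K \<phi> (coset K 0)"
        by (simp add: induced_coset coset_eq_iff[OF K] additive.zero[OF \<phi>])
      then have "coset K x = coset K 0"
        using inj by (auto simp: quot_def inj_on_def)
      then show "x \<in> K"
        by (simp add: coset_eq_iff[OF K])
    qed
  next
    assume kernel: "\<forall>x. \<phi> x \<in> K \<longrightarrow> x \<in> K"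
    show "inj_on (induced K \<phi>) (quot K)"
    proof (rule inj_onI)
      fix C D assume "C \<in> quot K" "D \<in> quot K" and eq: "induced K \<phi> C = induced K \<phi> D"
      then obtain x y where C: "C = coset K x" and D: "D = coset K y"
        by (auto simp: quot_def)
      with eq have "\<phi> x - \<phi> y \<in> K"
        by (simp add: induced_coset coset_eq_iff[OF K])
      with kernel C D show "C = D"
        by (simp add: coset_eq_iff[OF K] additive.diff[OF \<phi>, symmetric])
    qed
  qed
  moreover have "bij_betw (induced K \<phi>) (quot K) (quot K) \<longleftrightarrow> inj_on (induced K \<phi>) (quot K)"
    using into endo_inj_surj[of "quot K" "induced K \<phi>"] by (auto simp: bij_betw_def)
  moreover have "coset K (\<phi> (a + b)) = coset K (\<phi> a + \<phi> b)" for a b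
    by (simp add: additive.add[OF \<phi>])
  ultimately show ?thesis
    unfolding induces_automorphism_def using coset_eq_imp_coset_eq by blast
qed

end

text \<open>A separate constant for the absolute trace, because the simplifier rewrites the
  numeral in \<^term>\<open>tr 1 N\<close> to \<^term>\<open>Suc 0\<close>, so that rewrite rules stated for
  \<^term>\<open>tr 1 N\<close> would not fire.\<close>
definition abs_trace :: "nat \<Rightarrow> 'a::field \<Rightarrow> 'a" where
  "abs_trace N = tr 1 N"

context
  assumes char2: "CHAR('a::field) = 2"
begin

lemma char2_two_eq_0: "(2::'a) = 0"
  by (metis char2 of_nat_CHAR of_nat_numeral)

lemma char2_add_self: "(x::'a) + x = 0"
  by (metis char2_two_eq_0 mult_2 mult_zero_left)

lemma char2_add_eq_0_iff: "(x::'a) + y = 0 \<longleftrightarrow> x = y"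
  by (metis char2_add_self add.assoc add_0_right)

lemma additive_frobenius: "additive (\<lambda>x::'a. x ^ 2 ^ j)"
proof
  fix x y :: 'a
  show "(x + y) ^ 2 ^ j = x ^ 2 ^ j + y ^ 2 ^ j"
  proof (induction j)
    case (Suc j)
    have "(x + y) ^ 2 ^ Suc j = ((x + y) ^ 2 ^ j)\<^sup>2"
      by (simp add: power_mult[symmetric] mult.commute)
    also have "\<dots> = (x ^ 2 ^ j)\<^sup>2 + (y ^ 2 ^ j)\<^sup>2 + 2 * x ^ 2 ^ j * y ^ 2 ^ j"
      unfolding Suc by (simp add: power2_eq_square algebra_simps)
    also have "\<dots> = x ^ 2 ^ Suc j + y ^ 2 ^ Suc j"
      by (simp add: char2_two_eq_0 power_mult[symmetric] mult.commute)
    finally show ?case .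
  qed simp
qed

lemmas frobenius_add = additive.add[OF additive_frobenius]
lemmas frobenius_sum = additive.sum[OF additive_frobenius]

lemma frobenius_eq_iff: "(x::'a) ^ 2 ^ j = y ^ 2 ^ j \<longleftrightarrow> x = y"
  using frobenius_add[where j=j and x=x and y=y] by (metis char2_add_eq_0_iff power_eq_0_iff)

lemma additive_tr: "additive (tr m n :: 'a \<Rightarrow> 'a)"
  by standard (simp add: tr_def power_mult[symmetric] frobenius_add sum.distrib)

lemma additive_abs_trace: "additive (abs_trace N :: 'a \<Rightarrow> 'a)"
  by (simp add: abs_trace_def additive_tr)

lemma additive_lin2: "additive (lin2 N (a :: nat \<Rightarrow> 'a))"
  by standard (simp add: lin2_def frobenius_add distrib_left sum.distrib)

lemma tr_power2: "tr m n ((x::'a)\<^sup>2) = (tr m n x)\<^sup>2"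
  by (simp add: tr_def frobenius_sum[where j=1, simplified] power_mult[symmetric] mult.commute)

lemma abs_trace_tower: "abs_trace (m * n) (x::'a) = abs_trace m (tr m n x)"
proof -
  have "abs_trace m (tr m n x) = (\<Sum>j<m. \<Sum>i<n. x ^ 2 ^ (j + m * i))"
    by (simp add: abs_trace_def tr_def frobenius_sum power_mult[symmetric] power_add mult.commute)
  also have "\<dots> = (\<Sum>(j, i)\<in>{..<m} \<times> {..<n}. x ^ 2 ^ (j + m * i))"
    by (simp add: sum.cartesian_product)
  also have "\<dots> = (\<Sum>k<m * n. x ^ 2 ^ k)"
  proof (rule sum.reindex_bij_witness[where i="\<lambda>k. (k mod m, k div m)" and j="\<lambda>(j, i). j + m * i"])
    fix k assume "k \<in> {..<m * n}"
    then show "(k mod m, k div m) \<in> {..<m} \<times> {..<n}"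
      by (cases "m = 0") (auto simp: less_mult_imp_div_less mult.commute)
  next
    fix p assume "p \<in> {..<m} \<times> {..<n}"
    then obtain j i where p: "p = (j, i)" "j < m" "i < n"
      by blast
    then have "j + m * i < m * Suc i"
      by simp
    also have "\<dots> \<le> m * n"
      using p by (intro mult_le_mono2) simp
    finally show "(case p of (j, i) \<Rightarrow> j + m * i) \<in> {..<m * n}"
      using p by simp
    show "((case p of (j, i) \<Rightarrow> j + m * i) mod m, (case p of (j, i) \<Rightarrow> j + m * i) div m) = p"
      using p by simp
  qed auto
  finally show ?thesis
    by (simp add: abs_trace_def tr_def)
qed

end

text \<open>The library's \<open>finite_field_power_card_eq_same\<close> is stated for the type class
  \<open>finite_field\<close>, which a type of sort \<open>{field, finite}\<close> is not known to instantiate.\<close>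
lemma field_finite_power_card:
  fixes x :: "'a::{field,finite}"
  shows "x ^ card (UNIV :: 'a set) = x"
proof (cases "x = 0")
  case False
  let ?U = "UNIV - {0} :: 'a set"
  have "bij_betw ((*) x) ?U ?U"
    using False by (intro bij_betwI[where g="\<lambda>y. y / x"]) auto
  then have "(\<Prod>y\<in>?U. y) = (\<Prod>y\<in>?U. x * y)"
    by (rule prod.reindex_bij_betw[where g="\<lambda>y. y", symmetric])
  also have "\<dots> = x ^ card ?U * (\<Prod>y\<in>?U. y)"
    by (simp add: prod.distrib)
  finally have "1 * (\<Prod>y\<in>?U. y) = x ^ card ?U * (\<Prod>y\<in>?U. y)"
    by simp
  moreover have "(\<Prod>y\<in>?U. y) \<noteq> 0"
    by simp
  ultimately have unit: "x ^ card ?U = 1"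
    by (simp only: mult_cancel_right) simp
  have "card (UNIV :: 'a set) = Suc (card ?U)"
    using finite_UNIV_card_ge_0[where 'a='a] by (simp add: card_Diff_singleton)
  then show ?thesis
    using unit by (metis power_Suc mult_1_right)
qed (simp add: finite_UNIV_card_ge_0)

lemma two_le_card_field: "2 \<le> card (UNIV :: 'a::{field,finite} set)"
proof -
  have "card {0, 1::'a} \<le> card (UNIV :: 'a set)"
    by (rule card_mono) simp_all
  then show ?thesis
    by simp
qed

lemma CHAR_eq_2_if_card:
  assumes "card (UNIV :: 'a::{field,finite} set) = 2 ^ N"
  shows "CHAR('a) = 2"
proof -
  have "prime CHAR('a)"
    by (intro prime_CHAR_semidom finite_imp_CHAR_pos) simp
  moreover have "CHAR('a) dvd 2 ^ N"
    using CHAR_dvd_CARD[where 'a='a] assms by simp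
  ultimately have "CHAR('a) dvd 2"
    using prime_dvd_power by blast
  with \<open>prime CHAR('a)\<close> show ?thesis
    using primes_dvd_imp_eq two_is_prime_nat by blast
qed

context
  assumes char2: "CHAR('a::{field,finite}) = 2"
begin

lemma bij_frobenius: "bij (\<lambda>x::'a. x ^ 2 ^ j)"
  by (simp add: finite_UNIV_inj_surj bij_def inj_def frobenius_eq_iff[OF char2])

lemma frob_inv_eq_iff: "frob_inv j (y::'a) = z \<longleftrightarrow> z ^ 2 ^ j = y"
proof -
  obtain z0 :: 'a where z0: "z0 ^ 2 ^ j = y"
    using bij_frobenius[of j] by (metis bij_pointE)
  have "frob_inv j y = z0"
    unfolding frob_inv_def using z0
    by (rule the_equality) (simp add: z0[symmetric] frobenius_eq_iff[OF char2])
  then show ?thesis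
    using z0 frobenius_eq_iff[OF char2] by auto
qed

lemma frob_inv_power [simp]: "frob_inv j (y::'a) ^ 2 ^ j = y"
  using frob_inv_eq_iff by blast

lemma additive_frob_inv: "additive (frob_inv j :: 'a \<Rightarrow> 'a)"
  by standard (simp add: frob_inv_eq_iff frobenius_add[OF char2])

lemma sqrt2_eq_frob_inv: "sqrt2 = (frob_inv 1 :: 'a \<Rightarrow> 'a)"
  by (simp add: fun_eq_iff sqrt2_def frob_inv_def)

lemma sqrt2_power2 [simp]: "(sqrt2 (y::'a))\<^sup>2 = y"
  using frob_inv_power[of 1 y] by (simp add: sqrt2_eq_frob_inv)

lemma additive_sqrt2: "additive (sqrt2 :: 'a \<Rightarrow> 'a)"
  using additive_frob_inv[of 1] by (simp add: sqrt2_eq_frob_inv)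

lemma additive_lin2_adj: "additive (lin2_adj N (a :: nat \<Rightarrow> 'a))"
  by standard (simp add: lin2_adj_def distrib_left additive.add[OF additive_frob_inv] sum.distrib)

end

definition fixed_field :: "nat \<Rightarrow> 'a::field set" where
  "fixed_field m = {x. x ^ 2 ^ m = x}"

lemma sum_lessThan_rotate:
  fixes f :: "nat \<Rightarrow> 'a::cancel_comm_monoid_add"
  assumes "f n = f 0"
  shows "(\<Sum>i<n. f (Suc i)) = (\<Sum>i<n. f i)"
  using sum.lessThan_Suc_shift[of f n] assms by (simp add: add.commute)

lemma fixed_field_power:
  assumes "s \<in> fixed_field m"
  shows "s ^ (2 ^ m) ^ i = s"
proof (induction i)
  case (Suc i)
  then show ?case
    using assms by (simp add: fixed_field_def power_mult)
qed simp

lemma tr_mult_fixed_field: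
  assumes "s \<in> fixed_field m"
  shows "tr m n (s * x) = s * tr m n x"
  using fixed_field_power[OF assms] by (simp add: tr_def power_mult_distrib sum_distrib_left)

lemma tr_fixed_field:
  assumes "s \<in> fixed_field m"
  shows "tr m n s = of_nat n * s"
  using fixed_field_power[OF assms] by (simp add: tr_def)

context
  fixes m n :: nat
  assumes card: "card (UNIV :: 'a::{field,finite} set) = 2 ^ (m * n)"
begin

lemma power_q_power_n [simp]: "(x::'a) ^ (2 ^ m) ^ n = x"
  using field_finite_power_card[of x] card by (simp add: power_mult)

lemma tr_power_q: "tr m n ((x::'a) ^ 2 ^ m) = tr m n x"
proof -
  have "tr m n (x ^ 2 ^ m) = (\<Sum>i<n. x ^ (2 ^ m) ^ Suc i)"
    by (simp add: tr_def power_mult[symmetric] mult.commute)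
  also have "\<dots> = tr m n x"
    unfolding tr_def by (rule sum_lessThan_rotate) simp
  finally show ?thesis .
qed

lemma tr_mem_fixed_field: "tr m n (x::'a) \<in> fixed_field m"
proof -
  have "tr m n x ^ 2 ^ m = tr m n (x ^ 2 ^ m)"
    by (simp add: tr_def frobenius_sum[OF CHAR_eq_2_if_card[OF card]] power_mult[symmetric] mult.commute)
  then show ?thesis
    by (simp add: fixed_field_def tr_power_q)
qed

end

section \<open>The trace form\<close>

context
  fixes N :: nat
  assumes card: "card (UNIV :: 'a::{field,finite} set) = 2 ^ N"
begin

lemma abs_trace_power2: "abs_trace N ((z::'a)\<^sup>2) = abs_trace N z"
  using tr_power_q[of 1 N z] card by (simp add: abs_trace_def)

lemma abs_trace_frobenius: "abs_trace N ((z::'a) ^ 2 ^ j) = abs_trace N z"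
proof (induction j)
  case (Suc j)
  then show ?case
    using abs_trace_power2[of "z ^ 2 ^ j"] by (simp add: power_mult[symmetric] mult.commute)
qed simp

lemma abs_trace_eq_0_or_1: "abs_trace N (z::'a) = 0 \<or> abs_trace N z = 1"
proof -
  have "(abs_trace N z)\<^sup>2 = abs_trace N z"
    using tr_mem_fixed_field[of 1 N z] card by (simp add: abs_trace_def fixed_field_def)
  then show ?thesis
    by (simp add: power2_eq_square)
qed

lemma abs_trace_not_zero: "\<exists>z::'a. abs_trace N z \<noteq> 0"
proof -
  define p :: "'a poly" where "p = (\<Sum>i<N. Polynomial.monom 1 (2 ^ i))"
  have poly_p: "poly p z = abs_trace N z" for z
    by (simp add: p_def abs_trace_def tr_def poly_sum poly_monom)
  have "N \<noteq> 0"
    using two_le_card_field[where 'a='a] card by (cases N) auto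
  then have "Polynomial.coeff p 1 = 1"
    by (simp add: p_def coeff_sum coeff_monom)
  then have "card {z. poly p z = 0} \<le> degree p"
    by (intro card_poly_roots_bound) auto
  also have "degree p < 2 ^ N"
    unfolding p_def using \<open>N \<noteq> 0\<close> by (intro degree_sum_less) (auto simp: degree_monom_eq)
  finally have "{z. poly p z = 0} \<noteq> UNIV"
    using card by auto
  then show ?thesis
    by (auto simp: poly_p)
qed

end

definition trace_orth :: "nat \<Rightarrow> 'a::field set \<Rightarrow> 'a set" where
  "trace_orth N V = {x. \<forall>v\<in>V. abs_trace N (x * v) = 0}"

definition trace_sign :: "nat \<Rightarrow> 'a::field \<Rightarrow> int" where
  "trace_sign N z = (if abs_trace N z = 0 then 1 else -1)"

lemma trace_orth_antimono: "A \<subseteq> B \<Longrightarrow> trace_orth N B \<subseteq> trace_orth N A"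
  by (auto simp: trace_orth_def)

lemma preimage_trace_orth:
  assumes "\<And>x y. abs_trace N (h x * y) = abs_trace N (x * h' y)"
  shows "{x. h x \<in> trace_orth N V} = trace_orth N (h' ` V)"
  using assms by (auto simp: trace_orth_def mult.commute)

context
  fixes N :: nat
  assumes card: "card (UNIV :: 'a::{field,finite} set) = 2 ^ N"
begin

lemma add_subgroup_trace_orth: "add_subgroup (trace_orth N (V::'a set))"
  using additive_abs_trace[OF CHAR_eq_2_if_card[OF card]]
  by (simp add: add_subgroup_def trace_orth_def distrib_right additive.zero additive.add additive.minus)

lemma trace_orth_UNIV: "trace_orth N (UNIV :: 'a set) = {0}"
proof -
  obtain z :: 'a where z: "abs_trace N z \<noteq> 0"
    using abs_trace_not_zero[OF card] by blast
  have "x = 0" if x: "x \<in> trace_orth N UNIV" for x :: 'a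
  proof (rule ccontr)
    assume "x \<noteq> 0"
    have "abs_trace N (x * (z / x)) = 0"
      using x unfolding trace_orth_def by blast
    with \<open>x \<noteq> 0\<close> z show False
      by simp
  qed
  moreover have "0 \<in> trace_orth N (UNIV :: 'a set)"
    using add_subgroup_trace_orth by (simp add: add_subgroup_def)
  ultimately show ?thesis
    by blast
qed

lemma sum_trace_sign:
  assumes "add_subgroup V"
  shows "(\<Sum>v\<in>V. trace_sign N ((x::'a) * v)) = (if x \<in> trace_orth N V then int (card V) else 0)"
proof (cases "x \<in> trace_orth N V")
  case True
  then have "trace_sign N (x * v) = 1" if "v \<in> V" for v
    using that by (simp add: trace_orth_def trace_sign_def)
  with True show ?thesis
    by simp
next
  case False
  have char2: "CHAR('a) = 2"
    using CHAR_eq_2_if_card[OF card] .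
  from False obtain g where g: "g \<in> V" "abs_trace N (x * g) = 1"
    using abs_trace_eq_0_or_1[OF card] by (auto simp: trace_orth_def)
  have flip: "trace_sign N (x * (v + g)) = - trace_sign N (x * v)" for v
  proof -
    have "abs_trace N (x * (v + g)) = abs_trace N (x * v) + 1"
      using additive_abs_trace[OF char2] g(2) by (simp add: distrib_left additive.add)
    then show ?thesis
      using abs_trace_eq_0_or_1[OF card, of "x * v"] char2_two_eq_0[OF char2]
      by (auto simp: trace_sign_def)
  qed
  have "bij_betw (\<lambda>v. v + g) V V"
    using assms g(1) add_subgroup_diff[OF assms _ g(1)]
    by (intro bij_betwI[where g="\<lambda>v. v - g"]) (auto simp: add_subgroup_def)
  then have "(\<Sum>v\<in>V. trace_sign N (x * v)) = (\<Sum>v\<in>V. trace_sign N (x * (v + g)))"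
    by (rule sum.reindex_bij_betw[symmetric])
  also have "\<dots> = - (\<Sum>v\<in>V. trace_sign N (x * v))"
    by (simp add: flip sum_negf)
  finally show ?thesis
    using False by simp
qed

lemma card_mult_card_trace_orth:
  assumes "add_subgroup (V::'a set)"
  shows "card V * card (trace_orth N V) = card (UNIV :: 'a set)"
proof -
  have "int (card (trace_orth N V)) * int (card V)
      = (\<Sum>x\<in>UNIV. if x \<in> trace_orth N V then int (card V) else 0)"
    using sum.inter_restrict[of "UNIV :: 'a set" "\<lambda>_. int (card V)" "trace_orth N V"] by simp
  also have "\<dots> = (\<Sum>x\<in>UNIV. \<Sum>v\<in>V. trace_sign N ((x::'a) * v))"
    by (simp add: sum_trace_sign[OF assms])
  also have "\<dots> = (\<Sum>v\<in>V. \<Sum>x\<in>UNIV. trace_sign N (v * x))"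
    by (subst sum.swap) (simp add: mult.commute)
  also have "\<dots> = (\<Sum>v\<in>V. if v = 0 then int (card (UNIV :: 'a set)) else 0)"
    by (simp add: sum_trace_sign[OF add_subgroup_UNIV] trace_orth_UNIV)
  also have "\<dots> = int (card (UNIV :: 'a set))"
    using assms by (simp add: sum.delta add_subgroup_def)
  finally show ?thesis
    by (metis mult.commute of_nat_eq_iff of_nat_mult)
qed

lemma trace_orth_trace_orth:
  assumes "add_subgroup (V::'a set)"
  shows "trace_orth N (trace_orth N V) = V"
proof (rule card_subset_eq[symmetric])
  show "V \<subseteq> trace_orth N (trace_orth N V)"
    by (auto simp: trace_orth_def mult.commute)
  have "card (trace_orth N V) \<noteq> 0"
    using add_subgroup_trace_orth[of V] by (auto simp: add_subgroup_def)
  then show "card V = card (trace_orth N (trace_orth N V))"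
    using card_mult_card_trace_orth[OF assms] card_mult_card_trace_orth[OF add_subgroup_trace_orth]
    by (metis mult.commute mult_left_cancel)
qed simp

lemma trace_orth_subset_iff:
  assumes "add_subgroup (A::'a set)" and "add_subgroup B"
  shows "trace_orth N A \<subseteq> trace_orth N B \<longleftrightarrow> B \<subseteq> A"
  using trace_orth_antimono[of "trace_orth N A" "trace_orth N B" N] trace_orth_antimono[of B A N]
  by (auto simp: trace_orth_trace_orth[OF assms(1)] trace_orth_trace_orth[OF assms(2)])

lemma abs_trace_lin2_adjoint: "abs_trace N (lin2 M a x * y) = abs_trace N ((x::'a) * lin2_adj M a y)"
proof -
  have char2: "CHAR('a) = 2"
    using CHAR_eq_2_if_card[OF card] .
  have "abs_trace N (a j * x ^ 2 ^ j * y) = abs_trace N (x * frob_inv j (a j * y))" for j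
  proof -
    have "a j * x ^ 2 ^ j * y = (x * frob_inv j (a j * y)) ^ 2 ^ j"
      by (simp add: power_mult_distrib frob_inv_power[OF char2] mult_ac)
    then show ?thesis
      by (simp add: abs_trace_frobenius[OF card])
  qed
  then show ?thesis
    by (simp add: lin2_def lin2_adj_def sum_distrib_left sum_distrib_right
        additive.sum[OF additive_abs_trace[OF char2]])
qed

lemma abs_trace_square_adjoint: "abs_trace N ((x::'a)\<^sup>2 * y) = abs_trace N (x * sqrt2 y)"
proof -
  have "x\<^sup>2 * y = (x * sqrt2 y)\<^sup>2"
    by (simp add: power_mult_distrib sqrt2_power2[OF CHAR_eq_2_if_card[OF card]])
  then show ?thesis
    by (simp add: abs_trace_power2[OF card])
qed

lemma abs_trace_lin2_plus_square_adjoint: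
  "abs_trace N ((lin2 M a x + x\<^sup>2) * y) = abs_trace N ((x::'a) * (lin2_adj M a y + sqrt2 y))"
  using abs_trace_lin2_adjoint abs_trace_square_adjoint additive_abs_trace[OF CHAR_eq_2_if_card[OF card]]
  by (simp add: distrib_left distrib_right additive.add)

end

section \<open>Kernel and image of the relative trace\<close>

context
  fixes m n :: nat
  assumes card: "card (UNIV :: 'a::{field,finite} set) = 2 ^ (m * n)"
begin

lemma add_subgroup_fixed_field: "add_subgroup (fixed_field m :: 'a set)"
  using CHAR_eq_2_if_card[OF card]
  by (simp add: add_subgroup_def fixed_field_def frobenius_add uminus_CHAR_2)

lemma add_subgroup_ker_tr: "add_subgroup (ker_tr m n :: 'a set)"
  using add_subgroup_kernel[OF additive_tr[OF CHAR_eq_2_if_card[OF card]]]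
  by (simp add: ker_tr_def)

lemma ker_tr_subset_trace_orth: "ker_tr m n \<subseteq> trace_orth (m * n) (fixed_field m :: 'a set)"
proof
  have char2: "CHAR('a) = 2"
    using CHAR_eq_2_if_card[OF card] .
  fix k :: 'a assume "k \<in> ker_tr m n"
  have "abs_trace (m * n) (k * s) = 0" if "s \<in> fixed_field m" for s
  proof -
    have "abs_trace (m * n) (k * s) = abs_trace m (s * tr m n k)"
      using abs_trace_tower[OF char2] tr_mult_fixed_field[OF that] by (simp add: mult.commute)
    also have "\<dots> = 0"
      using \<open>k \<in> ker_tr m n\<close> additive.zero[OF additive_abs_trace[OF char2]]
      by (simp add: ker_tr_def)
    finally show ?thesis .
  qed
  then show "k \<in> trace_orth (m * n) (fixed_field m)"
    by (simp add: trace_orth_def)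
qed

lemma ker_tr_eq_trace_orth: "ker_tr m n = trace_orth (m * n) (fixed_field m :: 'a set)"
proof (rule card_seteq)
  have "card (fixed_field m :: 'a set) * card (trace_orth (m * n) (fixed_field m :: 'a set))
      = card (range (tr m n :: 'a \<Rightarrow> 'a)) * card (ker_tr m n :: 'a set)"
    using card_mult_card_trace_orth[OF card add_subgroup_fixed_field]
      additive.card_range_mult_card_kernel[OF additive_tr[OF CHAR_eq_2_if_card[OF card]]]
    by (simp add: ker_tr_def)
  also have "\<dots> \<le> card (fixed_field m :: 'a set) * card (ker_tr m n :: 'a set)"
    using tr_mem_fixed_field[OF card] by (intro mult_le_mono1 card_mono) auto
  finally show "card (trace_orth (m * n) (fixed_field m :: 'a set)) \<le> card (ker_tr m n :: 'a set)"
    using add_subgroup_fixed_field by (auto simp: add_subgroup_def)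
qed (simp_all add: ker_tr_subset_trace_orth)

lemma range_tr: "range (tr m n :: 'a \<Rightarrow> 'a) = fixed_field m"
proof (rule card_subset_eq)
  show "range (tr m n :: 'a \<Rightarrow> 'a) \<subseteq> fixed_field m"
    using tr_mem_fixed_field[OF card] by auto
  have "card (ker_tr m n :: 'a set) \<noteq> 0"
    using add_subgroup_ker_tr by (auto simp: add_subgroup_def)
  moreover have "card (range (tr m n :: 'a \<Rightarrow> 'a)) * card (ker_tr m n :: 'a set)
      = card (fixed_field m :: 'a set) * card (ker_tr m n :: 'a set)"
    using card_mult_card_trace_orth[OF card add_subgroup_fixed_field]
      additive.card_range_mult_card_kernel[OF additive_tr[OF CHAR_eq_2_if_card[OF card]]]
    by (simp add: ker_tr_def ker_tr_eq_trace_orth[symmetric])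
  ultimately show "card (range (tr m n :: 'a \<Rightarrow> 'a)) = card (fixed_field m :: 'a set)"
    by simp
qed simp

lemma fixed_field_eq_trace_orth: "fixed_field m = trace_orth (m * n) (ker_tr m n :: 'a set)"
  by (simp add: ker_tr_eq_trace_orth trace_orth_trace_orth[OF card add_subgroup_fixed_field])

lemma sqrt2_mem_ker_tr: "k \<in> ker_tr m n \<Longrightarrow> sqrt2 (k::'a) \<in> ker_tr m n"
  using tr_power2[OF CHAR_eq_2_if_card[OF card], of m n "sqrt2 k"]
  by (simp add: ker_tr_def sqrt2_power2[OF CHAR_eq_2_if_card[OF card]])

lemma plus_sqrt2_image_ker_tr_subset:
  assumes "h ` ker_tr m n \<subseteq> ker_tr m n"
  shows "(\<lambda>x::'a. h x + sqrt2 x) ` ker_tr m n \<subseteq> ker_tr m n"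
  using assms sqrt2_mem_ker_tr add_subgroup_ker_tr by (auto simp: add_subgroup_def)

lemma image_ker_tr_eq_iff:
  assumes "additive h'"
    and adjoint: "\<And>x y. abs_trace (m * n) (h x * y) = abs_trace (m * n) (x * h' y)"
  shows "h' ` ker_tr m n = ker_tr m n \<longleftrightarrow> (\<forall>y::'a. h y \<in> fixed_field m \<longrightarrow> y \<in> fixed_field m)"
proof -
  let ?K = "ker_tr m n :: 'a set" and ?S = "fixed_field m :: 'a set"
  have preimage: "{y. h y \<in> ?S} = trace_orth (m * n) (h' ` ?K)"
    unfolding fixed_field_eq_trace_orth by (rule preimage_trace_orth[OF adjoint])
  have "(\<forall>y. h y \<in> ?S \<longrightarrow> y \<in> ?S) \<longleftrightarrow> {y. h y \<in> ?S} \<subseteq> ?S"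
    by blast
  also have "\<dots> \<longleftrightarrow> trace_orth (m * n) (h' ` ?K) \<subseteq> trace_orth (m * n) ?K"
    unfolding preimage by (simp only: fixed_field_eq_trace_orth)
  also have "\<dots> \<longleftrightarrow> ?K \<subseteq> h' ` ?K"
    using trace_orth_subset_iff[OF card add_subgroup_image[OF assms(1) add_subgroup_ker_tr]
        add_subgroup_ker_tr] .
  also have "\<dots> \<longleftrightarrow> h' ` ?K = ?K"
  proof
    assume "?K \<subseteq> h' ` ?K"
    then show "h' ` ?K = ?K"
      using card_seteq[of "h' ` ?K" ?K] card_image_le[of ?K h'] by simp
  qed auto
  finally show ?thesis ..
qed

lemma induces_automorphism_ker_tr_iff:
  assumes "additive g" and "additive g'"
    and adjoint: "\<And>x y. abs_trace (m * n) (g x * y) = abs_trace (m * n) (x * g' y)"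
    and g'_ker: "g' ` ker_tr m n \<subseteq> ker_tr m n"
  shows "induces_automorphism (ker_tr m n) g' \<longleftrightarrow> (\<forall>y::'a\<in>fixed_field m. g y = 0 \<longrightarrow> y = 0)"
proof -
  let ?K = "ker_tr m n :: 'a set" and ?S = "fixed_field m :: 'a set"
  let ?orth = "trace_orth (m * n) :: 'a set \<Rightarrow> 'a set"
  have S: "add_subgroup ?S" and gS: "add_subgroup (g ` ?S)"
    using add_subgroup_fixed_field add_subgroup_image[OF assms(1)] by blast+
  have preimage: "{x. g' x \<in> ?K} = ?orth (g ` ?S)"
    unfolding ker_tr_eq_trace_orth using adjoint
    by (intro preimage_trace_orth) (simp add: mult.commute)
  have "?K \<subseteq> ?orth (g ` ?S)"
    using g'_ker preimage by blast
  then have "?orth ?S \<subseteq> ?orth (g ` ?S)"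
    unfolding ker_tr_eq_trace_orth .
  then have g_S: "g ` ?S \<subseteq> ?S"
    using trace_orth_subset_iff[OF card S gS] by blast
  have "induces_automorphism ?K g' \<longleftrightarrow> (\<forall>x. g' x \<in> ?K \<longrightarrow> x \<in> ?K)"
    by (rule induces_automorphism_iff_kernel[OF add_subgroup_ker_tr assms(2) g'_ker])
  also have "\<dots> \<longleftrightarrow> {x. g' x \<in> ?K} \<subseteq> ?K"
    by blast
  also have "\<dots> \<longleftrightarrow> ?orth (g ` ?S) \<subseteq> ?orth ?S"
    unfolding preimage by (simp only: ker_tr_eq_trace_orth)
  also have "\<dots> \<longleftrightarrow> g ` ?S = ?S"
    using trace_orth_subset_iff[OF card gS S] g_S by blast
  also have "\<dots> \<longleftrightarrow> inj_on g ?S"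
  proof
    assume "g ` ?S = ?S"
    then show "inj_on g ?S"
      by (intro eq_card_imp_inj_on) simp_all
  qed (rule endo_inj_surj[OF finite g_S])
  also have "\<dots> \<longleftrightarrow> (\<forall>y\<in>?S. g y = 0 \<longrightarrow> y = 0)"
    by (rule additive_inj_on_iff[OF assms(1) S])
  finally show ?thesis .
qed

end

section \<open>The quadratic form \<open>Tr(x^(q+1))\<close>\<close>

context
  fixes m n :: nat
  assumes card: "card (UNIV :: 'a::{field,finite} set) = 2 ^ (m * n)"
begin

lemma tr_power_q_plus_1_add:
  "tr m n (((x::'a) + y) ^ (2 ^ m + 1))
     = tr m n (x ^ (2 ^ m + 1)) + tr m n (y ^ (2 ^ m + 1))
       + tr m n (x * (y ^ 2 ^ m + y ^ (2 ^ m) ^ (n - 1)))"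
proof -
  have char2: "CHAR('a) = 2"
    using CHAR_eq_2_if_card[OF card] .
  have "n \<noteq> 0"
    using two_le_card_field[where 'a='a] card by (cases n) auto
  then have "((2::nat) ^ m) ^ (n - 1) * 2 ^ m = (2 ^ m) ^ n"
    by (cases n) (simp_all add: mult.commute)
  moreover have "y ^ 2 ^ (m * n) = y"
    using power_q_power_n[OF card] by (simp add: power_mult)
  ultimately have "(x * y ^ (2 ^ m) ^ (n - 1)) ^ 2 ^ m = x ^ 2 ^ m * y"
    by (simp add: power_mult_distrib power_mult[symmetric])
  then have swap: "tr m n (x ^ 2 ^ m * y) = tr m n (x * y ^ (2 ^ m) ^ (n - 1))"
    using tr_power_q[OF card, of "x * y ^ (2 ^ m) ^ (n - 1)"] by simp
  have "(x + y) ^ (2 ^ m + 1) = x ^ (2 ^ m + 1) + y ^ (2 ^ m + 1) + (x ^ 2 ^ m * y + x * y ^ 2 ^ m)"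
    by (simp add: frobenius_add[OF char2] algebra_simps)
  then show ?thesis
    using additive_tr[OF char2] by (simp add: additive.add swap distrib_left add_ac)
qed

lemma range_tr_mult:
  assumes "c \<noteq> 0"
  shows "range (\<lambda>x. tr m n (x * c)) = (fixed_field m :: 'a set)"
proof
  show "range (\<lambda>x. tr m n (x * c)) \<subseteq> fixed_field m"
    using range_tr[OF card] by auto
  show "fixed_field m \<subseteq> range (\<lambda>x. tr m n (x * c))"
  proof
    fix s :: 'a assume "s \<in> fixed_field m"
    then obtain z where "s = tr m n z"
      using range_tr[OF card] by blast
    then have "s = tr m n (z / c * c)"
      using assms by simp
    then show "s \<in> range (\<lambda>x. tr m n (x * c))"
      by blast
  qed
qed

context
  assumes odd: "odd n"
begin

lemma polar_eq_0_iff: "(y::'a) ^ 2 ^ m + y ^ (2 ^ m) ^ (n - 1) = 0 \<longleftrightarrow> y \<in> fixed_field m"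
proof
  assume "y ^ 2 ^ m + y ^ (2 ^ m) ^ (n - 1) = 0"
  then have q: "y ^ 2 ^ m = y ^ (2 ^ m) ^ (n - 1)"
    by (simp add: char2_add_eq_0_iff[OF CHAR_eq_2_if_card[OF card]])
  have "y ^ 2 ^ (2 * m) = (y ^ 2 ^ m) ^ 2 ^ m"
    by (simp add: power_mult[symmetric] power_add[symmetric] mult_2)
  also have "\<dots> = y ^ (2 ^ m) ^ Suc (n - 1)"
    by (simp add: q power_mult[symmetric] mult.commute)
  also have "\<dots> = y"
    using odd power_q_power_n[OF card] by (simp add: odd_pos)
  finally have "y \<in> fixed_field (2 * m)"
    by (simp add: fixed_field_def)
  moreover obtain k where "n - 1 = 2 * k"
    using odd by (metis odd_two_times_div_two_nat)
  moreover have "((2::nat) ^ (2 * m)) ^ k = (2 ^ m) ^ (n - 1)"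
    using \<open>n - 1 = 2 * k\<close> by (simp add: power_mult[symmetric] mult_ac)
  ultimately have "y ^ (2 ^ m) ^ (n - 1) = y"
    using fixed_field_power[of y "2 * m" k] by simp
  with q show "y \<in> fixed_field m"
    by (simp add: fixed_field_def)
next
  assume "y \<in> fixed_field m"
  then show "y ^ 2 ^ m + y ^ (2 ^ m) ^ (n - 1) = 0"
    using fixed_field_power[of y m "n - 1"] char2_add_self[OF CHAR_eq_2_if_card[OF card]]
    by (simp add: fixed_field_def)
qed

lemma tr_power_q_plus_1_fixed_field:
  assumes "y \<in> fixed_field m"
  shows "tr m n ((y::'a) ^ (2 ^ m + 1)) = y\<^sup>2"
proof -
  have "y ^ (2 ^ m + 1) = y\<^sup>2"
    using assms by (simp add: fixed_field_def power2_eq_square)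
  moreover have "(y\<^sup>2) ^ 2 ^ m = (y ^ 2 ^ m)\<^sup>2"
    by (simp only: power_mult[symmetric] mult.commute)
  then have "y\<^sup>2 \<in> fixed_field m"
    using assms by (simp add: fixed_field_def)
  moreover obtain k where "n = 2 * k + 1"
    using odd by (blast elim: oddE)
  then have "(of_nat n :: 'a) = 1"
    using char2_two_eq_0[OF CHAR_eq_2_if_card[OF card]] by simp
  ultimately show ?thesis
    by (simp add: tr_fixed_field)
qed

lemma tr_power_q_plus_1_collision_iff:
  assumes "additive L"
  shows "(\<exists>x. tr m n ((x + y) ^ (2 ^ m + 1)) + L (x + y) = tr m n (x ^ (2 ^ m + 1)) + L (x::'a))
    \<longleftrightarrow> (if y \<in> fixed_field m then L y + y\<^sup>2 = 0 else L y \<in> fixed_field m)"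
proof -
  have char2: "CHAR('a) = 2"
    using CHAR_eq_2_if_card[OF card] .
  define c where "c = y ^ 2 ^ m + y ^ (2 ^ m) ^ (n - 1)"
  define fy where "fy = tr m n (y ^ (2 ^ m + 1)) + L y"
  have "tr m n ((x + y) ^ (2 ^ m + 1)) + L (x + y)
      = (tr m n (x ^ (2 ^ m + 1)) + L x) + (fy + tr m n (x * c))" for x
    unfolding fy_def c_def tr_power_q_plus_1_add additive.add[OF assms] by (simp only: ac_simps)
  then have "tr m n ((x + y) ^ (2 ^ m + 1)) + L (x + y) = tr m n (x ^ (2 ^ m + 1)) + L x
      \<longleftrightarrow> fy = tr m n (x * c)" for x
    by (simp add: char2_add_eq_0_iff[OF char2])
  then have "(\<exists>x. tr m n ((x + y) ^ (2 ^ m + 1)) + L (x + y) = tr m n (x ^ (2 ^ m + 1)) + L x)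
      \<longleftrightarrow> fy \<in> range (\<lambda>x. tr m n (x * c))"
    by blast
  also have "\<dots> \<longleftrightarrow> (if y \<in> fixed_field m then L y + y\<^sup>2 = 0 else L y \<in> fixed_field m)"
  proof (cases "y \<in> fixed_field m")
    case True
    then have "c = 0" and "fy = L y + y\<^sup>2"
      using polar_eq_0_iff tr_power_q_plus_1_fixed_field by (simp_all add: c_def fy_def add.commute)
    then show ?thesis
      using True additive.zero[OF additive_tr[OF char2]] by auto
  next
    case False
    then have "c \<noteq> 0"
      using polar_eq_0_iff by (simp add: c_def)
    moreover have "fy \<in> fixed_field m \<longleftrightarrow> L y \<in> fixed_field m"
    proof -
      let ?Q = "tr m n (y ^ (2 ^ m + 1))"
      have "fy + ?Q = L y + (?Q + ?Q)"
        by (simp add: fy_def ac_simps)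
      then have "L y = fy + ?Q"
        by (simp add: char2_add_self[OF char2])
      then show ?thesis
        using add_subgroup_fixed_field[OF card] tr_mem_fixed_field[OF card, of "y ^ (2 ^ m + 1)"]
        unfolding fy_def add_subgroup_def by metis
    qed
    ultimately show ?thesis
      using False by (simp add: range_tr_mult)
  qed
  finally show ?thesis .
qed

lemma bij_tr_power_q_plus_1_add_iff:
  assumes "additive L"
  shows "bij (\<lambda>x::'a. tr m n (x ^ (2 ^ m + 1)) + L x)
    \<longleftrightarrow> (\<forall>y. L y \<in> fixed_field m \<longrightarrow> y \<in> fixed_field m)
        \<and> (\<forall>y\<in>fixed_field m. L y + y\<^sup>2 = 0 \<longrightarrow> y = 0)"
proof -
  define f where "f = (\<lambda>x::'a. tr m n (x ^ (2 ^ m + 1)) + L x)"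
  have "bij f \<longleftrightarrow> (\<forall>y. y \<noteq> 0 \<longrightarrow> \<not> (\<exists>x. f (x + y) = f x))"
    unfolding bij_iff_translate_neq by blast
  also have "\<dots> \<longleftrightarrow> (\<forall>y. y \<noteq> 0 \<longrightarrow>
      \<not> (if y \<in> fixed_field m then L y + y\<^sup>2 = 0 else L y \<in> fixed_field m))"
    unfolding f_def tr_power_q_plus_1_collision_iff[OF assms] ..
  also have "\<dots> \<longleftrightarrow> (\<forall>y. L y \<in> fixed_field m \<longrightarrow> y \<in> fixed_field m)
      \<and> (\<forall>y\<in>fixed_field m. L y + y\<^sup>2 = 0 \<longrightarrow> y = 0)"
  proof -
    have "0 \<in> (fixed_field m :: 'a set)"
      using add_subgroup_fixed_field[OF card] by (simp add: add_subgroup_def)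
    then show ?thesis
      by (smt (verit))
  qed
  finally show ?thesis
    unfolding f_def .
qed

end

end

theorem mainTheorem7:
  fixes m n :: nat and a :: "nat \<Rightarrow> 'a::{field,finite}"
  assumes "m \<ge> 1" and "odd n"
    and "card (UNIV :: 'a set) = 2 ^ (m * n)"
  shows "bij (\<lambda>x::'a. tr m n (x ^ (2 ^ m + 1)) + lin2 (m * n) a x) \<longleftrightarrow>
         (lin2_adj (m * n) a ` ker_tr m n = ker_tr m n \<and>
          induces_automorphism (ker_tr m n) (\<lambda>x. lin2_adj (m * n) a x + sqrt2 x))"
proof -
  note card = assms(3)
  note char2 = CHAR_eq_2_if_card[OF card]
  let ?L = "lin2 (m * n) a" and ?L' = "lin2_adj (m * n) a"
  have "bij (\<lambda>x. tr m n (x ^ (2 ^ m + 1)) + ?L x) \<longleftrightarrow>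
      (\<forall>y. ?L y \<in> fixed_field m \<longrightarrow> y \<in> fixed_field m)
      \<and> (\<forall>y\<in>fixed_field m. ?L y + y\<^sup>2 = 0 \<longrightarrow> y = 0)"
    by (rule bij_tr_power_q_plus_1_add_iff[OF card assms(2) additive_lin2[OF char2]])
  moreover have "?L' ` ker_tr m n = ker_tr m n \<longleftrightarrow> (\<forall>y. ?L y \<in> fixed_field m \<longrightarrow> y \<in> fixed_field m)"
    by (rule image_ker_tr_eq_iff[OF card additive_lin2_adj[OF char2] abs_trace_lin2_adjoint[OF card]])
  moreover have "induces_automorphism (ker_tr m n) (\<lambda>x. ?L' x + sqrt2 x)
      \<longleftrightarrow> (\<forall>y\<in>fixed_field m. ?L y + y\<^sup>2 = 0 \<longrightarrow> y = 0)"
    if "?L' ` ker_tr m n = ker_tr m n"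
    using additive_lin2[OF char2] additive_lin2_adj[OF char2] additive_sqrt2[OF char2]
      additive_frobenius[OF char2, of 1] that
    by (intro induces_automorphism_ker_tr_iff[OF card _ _ abs_trace_lin2_plus_square_adjoint[OF card]]
        plus_sqrt2_image_ker_tr_subset[OF card]) (simp_all add: additive_plus)
  ultimately show ?thesis
    by blast
qed

end
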